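(* Assume $r_t^l=r^l$ and $b_t^l=b^l$ for all $t\in\{1,\dots,T\}$ and $l\in\{1,\dots,L\}$. Given parameters $\gamma=\{\gamma_l\}_{l\le L}$, consider PB2: minimize $F(\rho)=\sum_{t=1}^T\sum_{l=1}^L\rho_t^l r^l b^l(\rho_t^l)$ s.t. $\sum_{t=1}^T\rho_t^l\ge\gamma_l$ for all $l$, $\rho_t^l\in[0,1]$; and PB5: minimize $\hat F(\hat\rho)=T\sum_{l=1}^L\hat\rho^l r^l b^l(\hat\rho^l)$ s.t. $T\hat\rho^l\ge\gamma_l$ for all $l$, $\hat\rho^l\in[0,1]$. If $\hat\rho^\ast=\{\hat\rho^l_\ast\}_{l\le L}$ is an optimal solution of PB5, then $\rho^\ast=\{\rho_t^{l\ast}\}$ with $\rho_t^{l\ast}=\hat\rho^l_\ast$ for all $t$ and $l$ is an optimal solution of PB2.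
   Context: $T,L$ positive integers; each $r^l$ is a positive integer and each $b^l:[0,1]\to[0,b^l_{\max}]$ is strictly increasing and convex. *)

theory Defs
  imports "HOL-Analysis.Analysis"
begin

definition F_PB2 :: "nat \<Rightarrow> nat \<Rightarrow> (nat \<Rightarrow> nat) \<Rightarrow> (nat \<Rightarrow> real \<Rightarrow> real)
    \<Rightarrow> (nat \<Rightarrow> nat \<Rightarrow> real) \<Rightarrow> real" where
  "F_PB2 T L r b rho = (\<Sum>t=1..T. \<Sum>l=1..L. rho t l * real (r l) * b l (rho t l))"

definition feasible_PB2 :: "nat \<Rightarrow> nat \<Rightarrow> (nat \<Rightarrow> real) \<Rightarrow> (nat \<Rightarrow> nat \<Rightarrow> real) \<Rightarrow> bool" where
  "feasible_PB2 T L \<gamma> rho \<longleftrightarrow>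
     (\<forall>l\<in>{1..L}. (\<Sum>t=1..T. rho t l) \<ge> \<gamma> l) \<and>
     (\<forall>t\<in>{1..T}. \<forall>l\<in>{1..L}. rho t l \<in> {0..1})"

definition optimal_PB2 :: "nat \<Rightarrow> nat \<Rightarrow> (nat \<Rightarrow> nat) \<Rightarrow> (nat \<Rightarrow> real \<Rightarrow> real)
    \<Rightarrow> (nat \<Rightarrow> real) \<Rightarrow> (nat \<Rightarrow> nat \<Rightarrow> real) \<Rightarrow> bool" where
  "optimal_PB2 T L r b \<gamma> rho \<longleftrightarrow> feasible_PB2 T L \<gamma> rho \<and>
     (\<forall>rho'. feasible_PB2 T L \<gamma> rho' \<longrightarrow> F_PB2 T L r b rho \<le> F_PB2 T L r b rho')"

definition F_PB5 :: "nat \<Rightarrow> nat \<Rightarrow> (nat \<Rightarrow> nat) \<Rightarrow> (nat \<Rightarrow> real \<Rightarrow> real)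
    \<Rightarrow> (nat \<Rightarrow> real) \<Rightarrow> real" where
  "F_PB5 T L r b rhoh = real T * (\<Sum>l=1..L. rhoh l * real (r l) * b l (rhoh l))"

definition feasible_PB5 :: "nat \<Rightarrow> nat \<Rightarrow> (nat \<Rightarrow> real) \<Rightarrow> (nat \<Rightarrow> real) \<Rightarrow> bool" where
  "feasible_PB5 T L \<gamma> rhoh \<longleftrightarrow>
     (\<forall>l\<in>{1..L}. real T * rhoh l \<ge> \<gamma> l \<and> rhoh l \<in> {0..1})"

definition optimal_PB5 :: "nat \<Rightarrow> nat \<Rightarrow> (nat \<Rightarrow> nat) \<Rightarrow> (nat \<Rightarrow> real \<Rightarrow> real)
    \<Rightarrow> (nat \<Rightarrow> real) \<Rightarrow> (nat \<Rightarrow> real) \<Rightarrow> bool" where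
  "optimal_PB5 T L r b \<gamma> rhoh \<longleftrightarrow> feasible_PB5 T L \<gamma> rhoh \<and>
     (\<forall>rhoh'. feasible_PB5 T L \<gamma> rhoh' \<longrightarrow> F_PB5 T L r b rhoh \<le> F_PB5 T L r b rhoh')"

end

theory Submission
  imports Defs
begin

text \<open>The per-period cost \<open>x \<mapsto> x r b(x)\<close> of a class is convex, being a product of
  nonnegative nondecreasing convex functions. By Jensen's inequality, replacing the
  loads \<open>\<rho>\<^sub>t\<^sup>l\<close> of any feasible PB2 solution by their time averages keeps it feasible
  (as a PB5 solution) and does not increase the cost; and a PB5 solution used in every
  period is a PB2 solution of the same cost.\<close>

lemma convex_on_ident_mult:
  fixes g :: "real \<Rightarrow> real"
  assumes "convex_on S g" "mono_on S g" "g \<in> S \<rightarrow> {0..}" "S \<subseteq> {0..}" "c \<ge> 0"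
  shows "convex_on S (\<lambda>x. x * c * g x)"
proof -
  have "convex S" using assms(1) convex_on_imp_convex by blast
  then have "convex_on S (\<lambda>x. x * g x)"
    using assms by (intro convex_on_mul) (auto simp: convex_on_ident mono_on_ident)
  then have "convex_on S (\<lambda>x. c * (x * g x))"
    by (rule convex_on_cmul[OF assms(5)])
  then show ?thesis by (simp add: algebra_simps)
qed

lemma convex_on_average:
  fixes f :: "real \<Rightarrow> real"
  assumes "convex_on C f" "finite A" "A \<noteq> {}" "\<And>i. i \<in> A \<Longrightarrow> x i \<in> C"
  shows "real (card A) * f ((\<Sum>i\<in>A. x i) / real (card A)) \<le> (\<Sum>i\<in>A. f (x i))"
proof -
  have n: "real (card A) > 0" using assms(2,3) by (simp add: card_gt_0_iff)
  have "f (\<Sum>i\<in>A. (1 / real (card A)) *\<^sub>R x i) \<le> (\<Sum>i\<in>A. (1 / real (card A)) * f (x i))"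
    using assms n by (intro convex_on_sum) auto
  then have "f ((\<Sum>i\<in>A. x i) / real (card A)) \<le> (\<Sum>i\<in>A. f (x i)) / real (card A)"
    by (simp add: sum_divide_distrib)
  then show ?thesis using n by (simp add: field_simps)
qed

definition time_average :: "nat \<Rightarrow> (nat \<Rightarrow> nat \<Rightarrow> real) \<Rightarrow> nat \<Rightarrow> real" where
  "time_average T rho l = (\<Sum>t=1..T. rho t l) / real T"

lemma feasible_PB5_time_average:
  assumes "T > 0" "feasible_PB2 T L \<gamma> rho"
  shows "feasible_PB5 T L \<gamma> (time_average T rho)"
  unfolding feasible_PB5_def
proof
  fix l assume l: "l \<in> {1..L}"
  have rng: "rho t l \<in> {0..1}" if "t \<in> {1..T}" for t
    using assms(2) l that by (auto simp: feasible_PB2_def)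
  have "(\<Sum>t=1..T. rho t l) \<ge> \<gamma> l" using assms(2) l by (auto simp: feasible_PB2_def)
  moreover have "(\<Sum>t=1..T. rho t l) \<le> (\<Sum>t=1..T. 1)" using rng by (intro sum_mono) auto
  moreover have "(\<Sum>t=1..T. rho t l) \<ge> 0" using rng by (intro sum_nonneg) auto
  ultimately show "real T * time_average T rho l \<ge> \<gamma> l \<and> time_average T rho l \<in> {0..1}"
    using assms(1) by (auto simp: time_average_def field_simps)
qed

lemma F_PB5_time_average_le:
  assumes "T > 0" "feasible_PB2 T L \<gamma> rho"
    and "\<And>l. l \<in> {1..L} \<Longrightarrow> convex_on {0..1} (\<lambda>x. x * real (r l) * b l x)"
  shows "F_PB5 T L r b (time_average T rho) \<le> F_PB2 T L r b rho"
proof -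
  have "real T * (time_average T rho l * real (r l) * b l (time_average T rho l))
      \<le> (\<Sum>t=1..T. rho t l * real (r l) * b l (rho t l))" if l: "l \<in> {1..L}" for l
    using convex_on_average[OF assms(3)[OF l], of "{1..T}" "\<lambda>t. rho t l"] assms(1,2) l
    by (auto simp: time_average_def feasible_PB2_def)
  then show ?thesis
    unfolding F_PB5_def F_PB2_def sum_distrib_left
    by (subst sum.swap) (rule sum_mono)
qed

lemma feasible_PB2_constant:
  "feasible_PB5 T L \<gamma> rhoh \<Longrightarrow> feasible_PB2 T L \<gamma> (\<lambda>t l. rhoh l)"
  by (simp add: feasible_PB2_def feasible_PB5_def)

lemma F_PB2_constant: "F_PB2 T L r b (\<lambda>t l. rhoh l) = F_PB5 T L r b rhoh"
  by (simp add: F_PB2_def F_PB5_def)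

theorem lemma6:
  fixes T L :: nat and r :: "nat \<Rightarrow> nat" and b :: "nat \<Rightarrow> real \<Rightarrow> real"
    and bmax :: "nat \<Rightarrow> real" and \<gamma> :: "nat \<Rightarrow> real" and rhoh :: "nat \<Rightarrow> real"
  assumes "T > 0" and "L > 0"
    and "\<forall>l\<in>{1..L}. r l > 0"
    and "\<forall>l\<in>{1..L}. \<forall>x\<in>{0..1}. b l x \<in> {0..bmax l}"
    and "\<forall>l\<in>{1..L}. strict_mono_on {0..1} (b l)"
    and "\<forall>l\<in>{1..L}. convex_on {0..1} (b l)"
    and "optimal_PB5 T L r b \<gamma> rhoh"
  shows "optimal_PB2 T L r b \<gamma> (\<lambda>t l. rhoh l)"
proof -
  have cost_convex: "convex_on {0..1} (\<lambda>x. x * real (r l) * b l x)" if "l \<in> {1..L}" for l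
    using assms(4-6) that
    by (intro convex_on_ident_mult) (auto simp: strict_mono_on_imp_mono_on)
  have "F_PB2 T L r b (\<lambda>t l. rhoh l) \<le> F_PB2 T L r b rho"
    if "feasible_PB2 T L \<gamma> rho" for rho
  proof -
    have "F_PB2 T L r b (\<lambda>t l. rhoh l) \<le> F_PB5 T L r b (time_average T rho)"
      using assms(1,7) that feasible_PB5_time_average
      by (auto simp: optimal_PB5_def F_PB2_constant)
    also have "\<dots> \<le> F_PB2 T L r b rho"
      using assms(1) that cost_convex by (rule F_PB5_time_average_le)
    finally show ?thesis .
  qed
  then show ?thesis
    using assms(7) by (auto simp: optimal_PB2_def optimal_PB5_def feasible_PB2_constant)
qed

end
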